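(* For a liner $X$ the following are equivalent: (1) $X$ is modular; (2) $X$ is strongly regular; (3) $X$ contains no two disjoint coplanar lines.
   Context: A liner is a set $X$ of points with a family of subsets called lines such that any two distinct points lie in a unique line and every line contains at least two points. For distinct $x,y$, $\overline{xy}$ is the line through them. A set is flat if it contains $\overline{xy}$ for all its distinct points $x,y$; $\overline A$ is the smallest flat containing $A$. The rank $\|A\|$ is the smallest cardinality of $B\subseteq X$ with $A\subseteq\overline B$. A plane is a flat of rank $3$; two lines are coplanar if both are contained in some plane. $X$ is modular if $\|A\cap B\|+\|A\cup B\|=\|A\|+\|B\|$ for all flats $A,B\subseteq X$. $X$ is strongly regular if for every nonempty flat $A\subseteq X$ and point $b\in X\setminus A$ we have $\overline{A\cup\{b\}}=\bigcup_{a\in A}\overline{ab}$. *)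

theory Defs
  imports Main
begin

definition liner :: "'a set \<Rightarrow> 'a set set \<Rightarrow> bool" where
  "liner X L \<longleftrightarrow>
     (\<forall>l\<in>L. l \<subseteq> X \<and> (\<exists>x y. x \<in> l \<and> y \<in> l \<and> x \<noteq> y)) \<and>
     (\<forall>x\<in>X. \<forall>y\<in>X. x \<noteq> y \<longrightarrow> (\<exists>!l. l \<in> L \<and> x \<in> l \<and> y \<in> l))"

definition line_through :: "'a set set \<Rightarrow> 'a \<Rightarrow> 'a \<Rightarrow> 'a set" where
  "line_through L x y = (THE l. l \<in> L \<and> x \<in> l \<and> y \<in> l)"

definition flat :: "'a set \<Rightarrow> 'a set set \<Rightarrow> 'a set \<Rightarrow> bool" where
  "flat X L A \<longleftrightarrow> A \<subseteq> X \<and>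
     (\<forall>x\<in>A. \<forall>y\<in>A. x \<noteq> y \<longrightarrow> line_through L x y \<subseteq> A)"

definition flat_hull :: "'a set \<Rightarrow> 'a set set \<Rightarrow> 'a set \<Rightarrow> 'a set" where
  "flat_hull X L A = \<Inter>{F. flat X L F \<and> A \<subseteq> F}"

text \<open>B is a set of minimal cardinality among subsets of X whose flat hull contains A;
  thus the rank of A is the cardinal of B.\<close>
definition rank_base :: "'a set \<Rightarrow> 'a set set \<Rightarrow> 'a set \<Rightarrow> 'a set \<Rightarrow> bool" where
  "rank_base X L A B \<longleftrightarrow> B \<subseteq> X \<and> A \<subseteq> flat_hull X L B \<and>
     (\<forall>C. C \<subseteq> X \<and> A \<subseteq> flat_hull X L C \<longrightarrow> (card_of B, card_of C) \<in> ordLeq)"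

definition plane :: "'a set \<Rightarrow> 'a set set \<Rightarrow> 'a set \<Rightarrow> bool" where
  "plane X L P \<longleftrightarrow> flat X L P \<and> (\<exists>B. rank_base X L P B \<and> finite B \<and> card B = 3)"

definition coplanar :: "'a set \<Rightarrow> 'a set set \<Rightarrow> 'a set \<Rightarrow> 'a set \<Rightarrow> bool" where
  "coplanar X L l1 l2 \<longleftrightarrow> (\<exists>P. plane X L P \<and> l1 \<subseteq> P \<and> l2 \<subseteq> P)"

text \<open>Modularity: rank(A \<inter> B) + rank(A \<union> B) = rank A + rank B as cardinals,
  for all flats A, B (ranks represented by minimal spanning sets).\<close>
definition modular_liner :: "'a set \<Rightarrow> 'a set set \<Rightarrow> bool" where
  "modular_liner X L \<longleftrightarrow>
     (\<forall>A B BA BB BI BU. flat X L A \<and> flat X L B \<and>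
        rank_base X L A BA \<and> rank_base X L B BB \<and>
        rank_base X L (A \<inter> B) BI \<and> rank_base X L (A \<union> B) BU \<longrightarrow>
        (BNF_Cardinal_Arithmetic.csum (card_of BI) (card_of BU),
         BNF_Cardinal_Arithmetic.csum (card_of BA) (card_of BB)) \<in> ordIso)"

definition strongly_regular :: "'a set \<Rightarrow> 'a set set \<Rightarrow> bool" where
  "strongly_regular X L \<longleftrightarrow>
     (\<forall>A b. flat X L A \<and> A \<noteq> {} \<and> b \<in> X - A \<longrightarrow>
        flat_hull X L (A \<union> {b}) = (\<Union>a\<in>A. line_through L a b))"

definition no_disjoint_coplanar_lines :: "'a set \<Rightarrow> 'a set set \<Rightarrow> bool" where
  "no_disjoint_coplanar_lines X L \<longleftrightarrow>
     \<not> (\<exists>l1\<in>L. \<exists>l2\<in>L. coplanar X L l1 l2 \<and> l1 \<inter> l2 = {})"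

end

theory Submission
  imports Defs HOL.Hull
begin

text \<open>
  If two disjoint lines lie in a plane, their union has rank at most 3, whereas modularity
  would give it rank 2 + 2 - 0 = 4.
  If no two coplanar lines are disjoint, let A be a flat and b a point outside it. Any two
  points of the cone formed by the lines ab (a \<in> A) lie in the plane spanned by b and two
  points a1, a2 of A, and for every point z of the line through them the line zb meets the
  line a1a2 \<subseteq> A; so the cone is a flat, which is strong regularity.
  Strong regularity yields the exchange property of the flat hull, hence Steinitz exchange for
  finite independent sets, and the modular law hull(A \<union> S) \<inter> B \<subseteq> hull((A \<inter> B) \<union> S) for
  S \<subseteq> B. By the modular law, a basis of A \<inter> B extends to bases of A and of B whose union is
  independent, which is the rank identity when the ranks are finite; infinite ranks are
  absorbed by cardinal addition.
\<close>

unbundle cardinal_syntax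

lemma finite_card_of_ordLeq_iff_card_le:
  assumes "finite A" "finite B"
  shows "|A| \<le>o |B| \<longleftrightarrow> card A \<le> card B"
  using card_of_ordLeq[of A B] inj_on_iff_card_le[OF assms] by blast

lemma card_of_ordLeq_if_card_le:
  assumes "finite A" and "finite B \<Longrightarrow> card A \<le> card B"
  shows "|A| \<le>o |B|"
proof (cases "finite B")
  case True
  then show ?thesis using assms finite_card_of_ordLeq_iff_card_le by blast
next
  case False
  then show ?thesis
    using assms(1) card_of_ordLeq_finite ordLeq_total card_of_Well_order by metis
qed

lemma finite_csum_ordIso_iff:
  assumes "finite A" "finite B" "finite C" "finite D"
  shows "|A| +c |B| =o |C| +c |D| \<longleftrightarrow> card A + card B = card C + card D"
proof -
  have "|A| +c |B| =o |C| +c |D| \<longleftrightarrow> |A <+> B| =o |C <+> D|"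
    unfolding csum_def Field_card_of ..
  also have "\<dots> \<longleftrightarrow> card (A <+> B) = card (C <+> D)"
    using assms by (auto simp: ordIso_iff_ordLeq finite_card_of_ordLeq_iff_card_le)
  finally show ?thesis
    using assms by (simp add: card_Plus)
qed

lemma csum_ordIso_csum_if_infinite:
  assumes "|C| \<le>o |A|" "|A| \<le>o |U|" "|B| \<le>o |U|" "|U| \<le>o |A \<union> B|" "infinite U"
  shows "|C| +c |U| =o |A| +c |B|"
proof -
  have inf: "cinfinite |U|"
    using assms(5) by (simp add: cinfinite_def Field_card_of)
  have "|C| +c |U| =o |U|"
    using csum_absorb2'[OF card_of_Card_order ordLeq_transitive[OF assms(1,2)]] inf by blast
  moreover have "|A| +c |B| =o |U|"
  proof -
    have "|U| +c |U| =o |U|"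
      using csum_absorb2'[OF card_of_Card_order ordLeq_reflexive[OF card_of_Well_order]] inf
      by blast
    then have "|A| +c |B| \<le>o |U|"
      using csum_mono[OF assms(2,3)] ordLeq_ordIso_trans by blast
    moreover have "|U| \<le>o |A| +c |B|"
      using ordLeq_transitive[OF assms(4) Un_csum] .
    ultimately show ?thesis
      using ordIso_iff_ordLeq by blast
  qed
  ultimately show ?thesis
    using ordIso_transitive ordIso_symmetric by blast
qed

section \<open>Lines, flats and rank bases\<close>

lemma flat_hull_eq_hull [simp]: "flat_hull X L A = flat X L hull A"
  unfolding flat_hull_def hull_def ..

lemma rank_baseD:
  assumes "rank_base X L S B"
  shows "B \<subseteq> X" "S \<subseteq> flat X L hull B"
    and "\<And>C. C \<subseteq> X \<Longrightarrow> S \<subseteq> flat X L hull C \<Longrightarrow> |B| \<le>o |C|"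
  using assms unfolding rank_base_def by auto

locale liner_structure =
  fixes X :: "'a set" and L :: "'a set set"
  assumes liner: "liner X L"
begin

abbreviation line :: "'a \<Rightarrow> 'a \<Rightarrow> 'a set" where
  "line \<equiv> line_through L"

lemma line_subset: "l \<in> L \<Longrightarrow> l \<subseteq> X"
  using liner unfolding liner_def by blast

lemma line_has_two_points: "l \<in> L \<Longrightarrow> \<exists>x y. x \<in> l \<and> y \<in> l \<and> x \<noteq> y"
  using liner unfolding liner_def by blast

lemma ex1_line:
  assumes "x \<in> X" "y \<in> X" "x \<noteq> y"
  shows "\<exists>!l. l \<in> L \<and> x \<in> l \<and> y \<in> l"
proof -
  have "\<forall>x\<in>X. \<forall>y\<in>X. x \<noteq> y \<longrightarrow> (\<exists>!l. l \<in> L \<and> x \<in> l \<and> y \<in> l)"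
    using liner unfolding liner_def by (rule conjunct2)
  then show ?thesis
    using assms by simp
qed

lemma line_through_spec:
  assumes "x \<in> X" "y \<in> X" "x \<noteq> y"
  shows "line x y \<in> L" "x \<in> line x y" "y \<in> line x y"
  using theI'[OF ex1_line[OF assms]] unfolding line_through_def by auto

lemma line_through_unique:
  assumes "l \<in> L" "x \<in> l" "y \<in> l" "x \<noteq> y"
  shows "line x y = l"
proof -
  have "x \<in> X" "y \<in> X"
    using assms line_subset by auto
  then show ?thesis
    unfolding line_through_def using the1_equality[OF ex1_line] assms by blast
qed

lemma line_through_subset: "x \<in> X \<Longrightarrow> y \<in> X \<Longrightarrow> x \<noteq> y \<Longrightarrow> line x y \<subseteq> X"
  using line_through_spec line_subset by blast

lemma line_through_eq:
  assumes "x \<in> X" "y \<in> X" "x \<noteq> y" "u \<in> line x y" "v \<in> line x y" "u \<noteq> v"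
  shows "line u v = line x y"
  by (rule line_through_unique[OF line_through_spec(1)[OF assms(1-3)] assms(4-6)])

lemma flat_subset: "flat X L A \<Longrightarrow> A \<subseteq> X"
  unfolding flat_def by blast

lemma flat_line_through_subset:
  "flat X L F \<Longrightarrow> x \<in> F \<Longrightarrow> y \<in> F \<Longrightarrow> x \<noteq> y \<Longrightarrow> line x y \<subseteq> F"
  unfolding flat_def by blast

lemma flat_carrier: "flat X L X"
  unfolding flat_def using line_through_subset by blast

lemma flat_empty: "flat X L {}"
  unfolding flat_def by simp

lemma flat_singleton: "x \<in> X \<Longrightarrow> flat X L {x}"
  unfolding flat_def by simp

lemma flat_line_through:
  assumes "x \<in> X" "y \<in> X" "x \<noteq> y"
  shows "flat X L (line x y)"
  unfolding flat_def
  using line_through_subset[OF assms] line_through_eq[OF assms] by simp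

lemma flat_Inter:
  assumes "S \<noteq> {}" "\<And>F. F \<in> S \<Longrightarrow> flat X L F"
  shows "flat X L (\<Inter>S)"
  unfolding flat_def
proof (intro conjI ballI impI)
  show "\<Inter>S \<subseteq> X"
    using assms flat_subset by blast
  show "line x y \<subseteq> \<Inter>S" if "x \<in> \<Inter>S" "y \<in> \<Inter>S" "x \<noteq> y" for x y
    using that assms(2) flat_line_through_subset by (meson Inter_iff subsetI subsetD)
qed

lemma flat_hull:
  assumes "A \<subseteq> X"
  shows "flat X L (flat X L hull A)"
  unfolding hull_def using assms flat_carrier by (intro flat_Inter) auto

lemma hull_of_flat: "flat X L F \<Longrightarrow> flat X L hull F = F"
  by (rule hull_same)

lemma hull_subset_carrier: "A \<subseteq> X \<Longrightarrow> flat X L hull A \<subseteq> X"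
  by (rule hull_minimal[where S = "flat X L", OF _ flat_carrier])

lemma hull_line_through_subset:
  "A \<subseteq> X \<Longrightarrow> x \<in> flat X L hull A \<Longrightarrow> y \<in> flat X L hull A \<Longrightarrow> x \<noteq> y \<Longrightarrow>
    line x y \<subseteq> flat X L hull A"
  by (rule flat_line_through_subset[OF flat_hull])

lemma hull_pair:
  assumes "x \<in> X" "y \<in> X" "x \<noteq> y"
  shows "flat X L hull {x, y} = line x y"
proof (rule hull_unique)
  show "{x, y} \<subseteq> line x y" "flat X L (line x y)"
    using assms line_through_spec flat_line_through by auto
qed (simp add: flat_line_through_subset assms(3))

lemma hull_card_le_1:
  assumes "finite C" "card C \<le> 1" "C \<subseteq> X"
  shows "flat X L hull C = C"
proof -
  have "C = {} \<or> (\<exists>c. C = {c})"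
    using assms(1,2) card_le_Suc0_iff_eq by fastforce
  then show ?thesis
    using assms(3) hull_of_flat flat_empty flat_singleton by fastforce
qed

lemma hull_card_le_2_subset_line_through:
  assumes "finite C" "card C \<le> 2" "C \<subseteq> X"
    and "a1 \<in> flat X L hull C" "a2 \<in> flat X L hull C" "a1 \<noteq> a2"
  shows "flat X L hull C \<subseteq> line a1 a2"
proof (cases "card C \<le> 1")
  case True
  then have "flat X L hull C = C"
    using assms(1,3) hull_card_le_1 by simp
  then have "a1 \<in> C" "a2 \<in> C"
    using assms(4,5) by auto
  then show ?thesis
    using True assms(1,6) card_le_Suc0_iff_eq by auto
next
  case False
  then have "card C = 2"
    using assms(2) by linarith
  then obtain c d where C: "C = {c, d}" "c \<noteq> d"
    by (meson card_2_iff)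
  then have "c \<in> X" "d \<in> X"
    using assms(3) by auto
  then have "flat X L hull C = line c d"
    using C hull_pair by simp
  moreover have "line a1 a2 = line c d"
    using line_through_eq[OF \<open>c \<in> X\<close> \<open>d \<in> X\<close> C(2)] assms(4-6) calculation by simp
  ultimately show ?thesis
    by simp
qed

lemma rank_baseI:
  assumes "finite B" "B \<subseteq> X" "S \<subseteq> flat X L hull B"
    and "\<And>C. finite C \<Longrightarrow> C \<subseteq> X \<Longrightarrow> S \<subseteq> flat X L hull C \<Longrightarrow> card B \<le> card C"
  shows "rank_base X L S B"
  unfolding rank_base_def flat_hull_eq_hull
proof (intro conjI allI impI)
  show "|B| \<le>o |C|" if "C \<subseteq> X \<and> S \<subseteq> flat X L hull C" for C
    using card_of_ordLeq_if_card_le[OF assms(1)] assms(4) that by blast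
qed (fact assms)+

lemma rank_base_exists:
  assumes "S \<subseteq> X"
  obtains B where "rank_base X L S B"
proof -
  let ?R = "card_of ` {C. C \<subseteq> X \<and> S \<subseteq> flat X L hull C}"
  have "|S| \<in> ?R"
    using assms by (intro imageI) (simp add: hull_subset)
  then have "?R \<noteq> {}"
    by blast
  then obtain r where r: "r \<in> ?R" "\<forall>r'\<in>?R. r \<le>o r'"
    using exists_minim_Well_order[of ?R] card_of_Well_order by blast
  then obtain B where "r = |B|" "B \<subseteq> X" "S \<subseteq> flat X L hull B"
    by blast
  moreover have "|B| \<le>o |C|" if "C \<subseteq> X \<and> S \<subseteq> flat X L hull C" for C
    using r(2) that calculation(1) by blast
  ultimately have "rank_base X L S B"
    unfolding rank_base_def by simp
  then show ?thesis
    by (rule that)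
qed

lemma rank_base_empty: "rank_base X L {} {}"
  by (rule rank_baseI) simp_all

lemma rank_base_line_through:
  assumes "x \<in> X" "y \<in> X" "x \<noteq> y"
  shows "rank_base X L (line x y) {x, y}"
proof (rule rank_baseI)
  show "line x y \<subseteq> flat X L hull {x, y}"
    using hull_pair[OF assms] by simp
  show "card {x, y} \<le> card C"
    if C: "finite C" "C \<subseteq> X" "line x y \<subseteq> flat X L hull C" for C
  proof (rule ccontr)
    assume "\<not> card {x, y} \<le> card C"
    then have "flat X L hull C = C"
      using C(1,2) assms(3) hull_card_le_1 by simp
    then have "{x, y} \<subseteq> C"
      using C(3) line_through_spec[OF assms] by auto
    then show False
      using \<open>\<not> card {x, y} \<le> card C\<close> C(1) card_mono by blast
  qed
qed (use assms in auto)

lemma rank_base_triangle: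
  assumes "a1 \<in> X" "a2 \<in> X" "b \<in> X" "a1 \<noteq> a2" "b \<notin> line a1 a2"
  shows "rank_base X L (flat X L hull {a1, a2, b}) {a1, a2, b}"
proof (rule rank_baseI)
  show "card {a1, a2, b} \<le> card C"
    if C: "finite C" "C \<subseteq> X" "flat X L hull {a1, a2, b} \<subseteq> flat X L hull C" for C
  proof (rule ccontr)
    assume "\<not> card {a1, a2, b} \<le> card C"
    moreover have "card {a1, a2, b} \<le> 3"
      by (simp add: card_insert_if)
    ultimately have "card C \<le> 2"
      by linarith
    moreover have "a1 \<in> flat X L hull C" "a2 \<in> flat X L hull C" "b \<in> flat X L hull C"
      using C(3) hull_inc[of _ "{a1, a2, b}"] by auto
    ultimately have "b \<in> line a1 a2"
      using hull_card_le_2_subset_line_through[OF C(1) _ C(2) _ _ assms(4)] by auto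
    then show False
      using assms(5) by contradiction
  qed
qed (use assms in simp_all)

lemma plane_hull_triangle:
  assumes "a1 \<in> X" "a2 \<in> X" "b \<in> X" "a1 \<noteq> a2" "b \<notin> line a1 a2"
  shows "plane X L (flat X L hull {a1, a2, b})"
proof -
  have "b \<noteq> a1" "b \<noteq> a2"
    using assms line_through_spec(2,3)[OF assms(1,2,4)] by auto
  then have "card {a1, a2, b} = 3"
    using assms(4) by simp
  moreover have "flat X L (flat X L hull {a1, a2, b})"
    using assms by (intro flat_hull) simp
  ultimately show ?thesis
    unfolding plane_def using rank_base_triangle[OF assms] by blast
qed

section \<open>Disjoint coplanar lines\<close>

lemma no_disjoint_coplanar_lines_if_modular:
  assumes "modular_liner X L"
  shows "no_disjoint_coplanar_lines X L"
  unfolding no_disjoint_coplanar_lines_def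
proof
  assume "\<exists>l1\<in>L. \<exists>l2\<in>L. coplanar X L l1 l2 \<and> l1 \<inter> l2 = {}"
  then obtain l1 l2 P where l: "l1 \<in> L" "l2 \<in> L" "l1 \<inter> l2 = {}" "l1 \<union> l2 \<subseteq> P"
    and "plane X L P"
    unfolding coplanar_def by blast
  then obtain BP where BP: "rank_base X L P BP" "finite BP" "card BP = 3"
    unfolding plane_def by blast
  obtain x y z w where xy: "x \<in> l1" "y \<in> l1" "x \<noteq> y" and zw: "z \<in> l2" "w \<in> l2" "z \<noteq> w"
    using line_has_two_points l(1,2) by metis
  have X: "x \<in> X" "y \<in> X" "z \<in> X" "w \<in> X"
    using xy zw line_subset l(1,2) by auto
  have "l1 = line x y" "l2 = line z w"
    using line_through_unique l(1,2) xy zw by auto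
  then have "flat X L l1" "flat X L l2" "rank_base X L l1 {x, y}" "rank_base X L l2 {z, w}"
    using flat_line_through rank_base_line_through X xy(3) zw(3) by auto
  moreover obtain BU where BU: "rank_base X L (l1 \<union> l2) BU"
    using rank_base_exists l(1,2) line_subset by (meson Un_least)
  moreover have "rank_base X L (l1 \<inter> l2) {}"
    using l(3) rank_base_empty by simp
  ultimately have "|{}::'a set| +c |BU| =o |{x, y}| +c |{z, w}|"
    using assms unfolding modular_liner_def by (elim allE impE) (intro conjI)
  moreover have "finite BU" "card BU \<le> 3"
  proof -
    have "|BU| \<le>o |BP|"
      using rank_baseD(1,2)[OF BP(1)] l(4) by (intro rank_baseD(3)[OF BU]) auto
    then show "finite BU" "card BU \<le> 3"
      using BP(2,3) card_of_ordLeq_finite finite_card_of_ordLeq_iff_card_le by metis+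
  qed
  ultimately have "card {} + card BU = card {x, y} + card {z, w}"
    by (subst (asm) finite_csum_ordIso_iff) auto
  moreover have "card {x, y} + card {z, w} = 4"
    using xy zw l(3) by auto
  ultimately show False
    using \<open>card BU \<le> 3\<close> by simp
qed

lemma triangle_hull_subset_lines_to_apex:
  assumes no_disj: "no_disjoint_coplanar_lines X L" and A: "flat X L A" "b \<in> X - A"
    and a: "a1 \<in> A" "a2 \<in> A" "a1 \<noteq> a2"
  shows "flat X L hull {a1, a2, b} \<subseteq> (\<Union>a\<in>A. line a b)"
proof
  fix z assume z: "z \<in> flat X L hull {a1, a2, b}"
  let ?P = "flat X L hull {a1, a2, b}"
  have X: "a1 \<in> X" "a2 \<in> X" "b \<in> X" "{a1, a2, b} \<subseteq> X"
    using A a flat_subset by auto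
  have "b \<in> line a1 b"
    using line_through_spec(3)[of a1 b] X a A(2) by blast
  show "z \<in> (\<Union>a\<in>A. line a b)"
  proof (cases "z = b")
    case True
    then show ?thesis
      using \<open>b \<in> line a1 b\<close> a(1) by blast
  next
    case False
    have "z \<in> X"
      using z hull_subset_carrier[OF X(4)] by blast
    have A12: "line a1 a2 \<subseteq> A"
      using flat_line_through_subset[OF A(1) a] .
    then have "plane X L ?P"
      using plane_hull_triangle[OF X(1-3) a(3)] A(2) by blast
    moreover have "line z b \<subseteq> ?P" "line a1 a2 \<subseteq> ?P"
      using hull_line_through_subset[OF X(4)] z False a(3) by (auto intro: hull_inc)
    ultimately have "coplanar X L (line z b) (line a1 a2)"
      unfolding coplanar_def by blast
    then obtain a where a: "a \<in> line z b" "a \<in> line a1 a2"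
      using no_disj line_through_spec(1) X \<open>z \<in> X\<close> False a(3)
      unfolding no_disjoint_coplanar_lines_def by blast
    then have "a \<in> A" "a \<noteq> b"
      using A12 A(2) by auto
    then have "line a b = line z b"
      using line_through_unique[OF line_through_spec(1)] line_through_spec(3) a(1)
        \<open>z \<in> X\<close> X(3) False by metis
    then show ?thesis
      using line_through_spec(2)[OF \<open>z \<in> X\<close> X(3) False] \<open>a \<in> A\<close> by blast
  qed
qed

lemma flat_Union_lines_to_point:
  assumes no_disj: "no_disjoint_coplanar_lines X L" and A: "flat X L A" "b \<in> X - A"
  shows "flat X L (\<Union>a\<in>A. line a b)"
  unfolding flat_def
proof (intro conjI ballI impI)
  have ab: "a \<in> X" "a \<noteq> b" if "a \<in> A" for a
    using that A flat_subset by auto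
  then show "(\<Union>a\<in>A. line a b) \<subseteq> X"
    using line_through_subset A(2) by blast
  fix x y assume "x \<in> (\<Union>a\<in>A. line a b)" "y \<in> (\<Union>a\<in>A. line a b)" "x \<noteq> y"
  then obtain a1 a2 where a: "a1 \<in> A" "x \<in> line a1 b" "a2 \<in> A" "y \<in> line a2 b"
    by blast
  show "line x y \<subseteq> (\<Union>a\<in>A. line a b)"
  proof (cases "a1 = a2")
    case True
    then have "line x y = line a1 b"
      using line_through_eq[OF ab(1)[OF a(1)] _ ab(2)[OF a(1)] a(2) _ \<open>x \<noteq> y\<close>] a(4) A(2)
      by blast
    then show ?thesis
      using a(1) by blast
  next
    case False
    let ?P = "flat X L hull {a1, a2, b}"
    have X: "{a1, a2, b} \<subseteq> X"
      using ab a A(2) by blast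
    have P: "a1 \<in> ?P" "a2 \<in> ?P" "b \<in> ?P"
      by (simp_all add: hull_inc)
    have "x \<in> ?P" "y \<in> ?P"
      using hull_line_through_subset[OF X P(1,3) ab(2)[OF a(1)]]
        hull_line_through_subset[OF X P(2,3) ab(2)[OF a(3)]] a(2,4) by auto
    then have "line x y \<subseteq> ?P"
      using hull_line_through_subset[OF X] \<open>x \<noteq> y\<close> by blast
    then show ?thesis
      using triangle_hull_subset_lines_to_apex[OF assms a(1,3) False] by blast
  qed
qed

lemma strongly_regular_if_no_disjoint_coplanar_lines:
  assumes "no_disjoint_coplanar_lines X L"
  shows "strongly_regular X L"
  unfolding strongly_regular_def flat_hull_eq_hull
proof (intro allI impI)
  fix A b assume A: "flat X L A \<and> A \<noteq> {} \<and> b \<in> X - A"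
  have ab: "a \<in> X" "a \<noteq> b" if "a \<in> A" for a
    using that A flat_subset by auto
  show "flat X L hull (A \<union> {b}) = (\<Union>a\<in>A. line a b)"
  proof (rule hull_unique)
    have "a \<in> line a b" "b \<in> line a b" if "a \<in> A" for a
      using line_through_spec(2,3)[OF ab(1)[OF that] _ ab(2)[OF that]] A by auto
    moreover obtain a0 where "a0 \<in> A"
      using A by blast
    ultimately show "A \<union> {b} \<subseteq> (\<Union>a\<in>A. line a b)"
      by blast
    show "flat X L (\<Union>a\<in>A. line a b)"
      using flat_Union_lines_to_point assms A by blast
    show "(\<Union>a\<in>A. line a b) \<subseteq> F" if "A \<union> {b} \<subseteq> F" "flat X L F" for F
    proof (rule UN_least)
      show "line a b \<subseteq> F" if "a \<in> A" for a
        using flat_line_through_subset[OF \<open>flat X L F\<close> _ _ ab(2)[OF that]]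
          \<open>A \<union> {b} \<subseteq> F\<close> that by blast
    qed
  qed
qed

section \<open>Independence and modularity\<close>

text \<open>Finiteness is part of independence: bases are only needed for flats of finite rank.\<close>

definition independent :: "'a set \<Rightarrow> bool" where
  "independent I \<longleftrightarrow> finite I \<and> I \<subseteq> X \<and> (\<forall>x\<in>I. x \<notin> flat X L hull (I - {x}))"

definition basis_of :: "'a set \<Rightarrow> 'a set \<Rightarrow> bool" where
  "basis_of S I \<longleftrightarrow> independent I \<and> I \<subseteq> S \<and> S \<subseteq> flat X L hull I"

lemma independent_empty: "independent {}"
  unfolding independent_def by simp

lemma independent_subset:
  assumes "independent I" "J \<subseteq> I"
  shows "independent J"
  unfolding independent_def
proof (intro conjI ballI)
  show "finite J" "J \<subseteq> X"
    using assms finite_subset unfolding independent_def by auto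
  show "x \<notin> flat X L hull (J - {x})" if "x \<in> J" for x
    using assms that hull_mono[of "J - {x}" "I - {x}"] unfolding independent_def by blast
qed

end

locale strongly_regular_liner = liner_structure +
  assumes strongly_regular: "strongly_regular X L"
begin

lemma hull_insert_eq_Union_lines:
  assumes "flat X L A" "A \<noteq> {}" "b \<in> X - A"
  shows "flat X L hull (insert b A) = (\<Union>a\<in>A. line a b)"
  using strongly_regular assms unfolding strongly_regular_def by simp

lemma mem_hull_insertE:
  assumes S: "S \<subseteq> X" "b \<in> X" and y: "y \<in> flat X L hull (insert b S)" "y \<noteq> b"
  obtains a where "a \<in> flat X L hull S" "a \<noteq> b" "y \<in> line a b"
proof (cases "b \<in> flat X L hull S")
  case True
  then have "y \<in> flat X L hull S"
    using y(1) hull_redundant[of b "flat X L" S] by simp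
  moreover from this have "y \<in> line y b"
    using hull_subset_carrier[OF S(1)] line_through_spec(2)[OF _ S(2) y(2)] by blast
  ultimately show ?thesis
    using that y(2) by blast
next
  case b: False
  show ?thesis
  proof (cases "S = {}")
    case True
    then have "flat X L hull (insert b S) = {b}"
      using hull_of_flat[OF flat_singleton[OF S(2)]] by simp
    then show ?thesis
      using y by simp
  next
    case False
    then have "flat X L hull S \<noteq> {}"
      using hull_subset[of S "flat X L"] by blast
    then have "flat X L hull (insert b (flat X L hull S)) = (\<Union>a\<in>flat X L hull S. line a b)"
      using hull_insert_eq_Union_lines[OF flat_hull[OF S(1)]] b S(2) by blast
    then have "y \<in> (\<Union>a\<in>flat X L hull S. line a b)"
      using y(1) hull_insert[of "flat X L" b S] by simp
    then obtain a where "a \<in> flat X L hull S" "y \<in> line a b"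
      by blast
    moreover from this have "a \<noteq> b"
      using b by blast
    ultimately show ?thesis
      using that by blast
  qed
qed

lemma hull_exchange:
  assumes S: "S \<subseteq> X" "b \<in> X"
    and c: "c \<in> flat X L hull (insert b S)" "c \<notin> flat X L hull S"
  shows "b \<in> flat X L hull (insert c S)"
proof (cases "c = b")
  case True
  then show ?thesis
    by (simp add: hull_inc)
next
  case False
  then obtain a where a: "a \<in> flat X L hull S" "a \<noteq> b" "c \<in> line a b"
    using mem_hull_insertE[OF S c(1)] by blast
  have "a \<in> X"
    using a(1) hull_subset_carrier[OF S(1)] by blast
  have "c \<in> X" "c \<noteq> a"
    using a c(2) line_through_subset[OF \<open>a \<in> X\<close> S(2) a(2)] by auto
  then have "line a c = line a b"
    using line_through_eq[OF \<open>a \<in> X\<close> S(2) a(2)] line_through_spec(2)[OF \<open>a \<in> X\<close> S(2) a(2)] a(3)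
    by metis
  moreover have "line a c \<subseteq> flat X L hull (insert c S)"
  proof (rule hull_line_through_subset)
    show "a \<in> flat X L hull (insert c S)"
      using a(1) hull_mono[of S "insert c S"] by blast
  qed (use S \<open>c \<in> X\<close> \<open>c \<noteq> a\<close> in \<open>auto intro: hull_inc\<close>)
  ultimately show ?thesis
    using line_through_spec(3)[OF \<open>a \<in> X\<close> S(2) a(2)] by blast
qed

lemma independent_insert:
  assumes I: "independent I" and c: "c \<in> X" "c \<notin> flat X L hull I"
  shows "independent (insert c I)"
  unfolding independent_def
proof (intro conjI ballI)
  show "finite (insert c I)" "insert c I \<subseteq> X"
    using I c(1) unfolding independent_def by auto
  have "c \<notin> I"
    using c(2) hull_subset[of I "flat X L"] by blast
  fix x assume x: "x \<in> insert c I"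
  show "x \<notin> flat X L hull (insert c I - {x})"
  proof (cases "x = c")
    case True
    then show ?thesis
      using c(2) \<open>c \<notin> I\<close> by simp
  next
    case False
    then have "x \<in> I" "insert c I - {x} = insert c (I - {x})"
      using x by auto
    moreover have "x \<notin> flat X L hull (I - {x})" "I - {x} \<subseteq> X"
      using I \<open>x \<in> I\<close> unfolding independent_def by auto
    moreover have "insert x (I - {x}) = I"
      using \<open>x \<in> I\<close> by blast
    ultimately show ?thesis
      using hull_exchange[of "I - {x}" c x] c by (metis insert_subset)
  qed
qed

lemma independent_card_le:
  assumes C: "finite C" "C \<subseteq> X"
  shows "independent I \<Longrightarrow> I \<subseteq> flat X L hull C \<Longrightarrow> card I \<le> card C"
  \<comment> \<open>Steinitz: trading a point of I - C for a point of C keeps I independent and shrinks I - C.\<close>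
proof (induction "card (I - C)" arbitrary: I rule: less_induct)
  case less
  note I = \<open>independent I\<close> and IC = \<open>I \<subseteq> flat X L hull C\<close>
  show ?case
  proof (cases "I \<subseteq> C")
    case True
    then show ?thesis
      using card_mono[OF C(1)] by blast
  next
    case False
    then obtain x where x: "x \<in> I" "x \<notin> C"
      by blast
    have "x \<notin> flat X L hull (I - {x})" "I - {x} \<subseteq> X" "finite I"
      using I x(1) unfolding independent_def by auto
    then have "\<not> C \<subseteq> flat X L hull (I - {x})"
      using IC x(1) hull_minimal[of C "flat X L hull (I - {x})" "flat X L"] flat_hull by blast
    then obtain c where c: "c \<in> C" "c \<notin> flat X L hull (I - {x})"
      by blast
    let ?J = "insert c (I - {x})"
    have "independent ?J"
      using independent_insert[OF independent_subset[OF I] _ c(2)] c(1) C(2) by blast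
    moreover have "?J \<subseteq> flat X L hull C"
      using IC c(1) hull_subset[of C "flat X L"] by blast
    moreover have "card (?J - C) < card (I - C)"
    proof -
      have "?J - C = (I - C) - {x}"
        using c(1) by blast
      moreover have "card ((I - C) - {x}) < card (I - C)"
        using x \<open>finite I\<close> by (intro card_Diff1_less) auto
      ultimately show ?thesis
        by simp
    qed
    ultimately have "card ?J \<le> card C"
      using less.hyps by blast
    moreover have "card ?J = card I"
    proof -
      have "c \<notin> I - {x}"
        using c(2) hull_subset[of "I - {x}" "flat X L"] by blast
      then show ?thesis
        using card_Suc_Diff1[OF \<open>finite I\<close> x(1)] \<open>finite I\<close> by simp
    qed
    ultimately show ?thesis
      by simp
  qed
qed

lemma basis_of_extend:
  assumes C: "finite C" "C \<subseteq> X" "S \<subseteq> flat X L hull C"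
  shows "independent I0 \<Longrightarrow> I0 \<subseteq> S \<Longrightarrow> \<exists>I. I0 \<subseteq> I \<and> basis_of S I"
proof (induction "card C - card I0" arbitrary: I0 rule: less_induct)
  case less
  show ?case
  proof (cases "S \<subseteq> flat X L hull I0")
    case True
    then show ?thesis
      using less.prems unfolding basis_of_def by blast
  next
    case False
    then obtain a where a: "a \<in> S" "a \<notin> flat X L hull I0"
      by blast
    have "a \<in> X"
      using a(1) C(3) hull_subset_carrier[OF C(2)] by blast
    let ?I = "insert a I0"
    have I: "independent ?I" "?I \<subseteq> S"
      using independent_insert[OF less.prems(1) \<open>a \<in> X\<close> a(2)] less.prems(2) a(1) by auto
    then have "card ?I \<le> card C"
      using independent_card_le[OF C(1,2)] C(3) by blast
    moreover have "card ?I = Suc (card I0)"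
    proof -
      have "a \<notin> I0"
        using a(2) hull_subset[of I0 "flat X L"] by blast
      then show ?thesis
        using less.prems(1) unfolding independent_def by simp
    qed
    ultimately have "card C - card ?I < card C - card I0"
      by simp
    then obtain J where "?I \<subseteq> J" "basis_of S J"
      using less.hyps I by blast
    then show ?thesis
      by blast
  qed
qed

lemma rank_base_card_eq:
  assumes B: "rank_base X L S B" and I: "basis_of S I"
  shows "finite B" "card B = card I"
proof -
  have "independent I" "I \<subseteq> S" "S \<subseteq> flat X L hull I"
    using I unfolding basis_of_def by auto
  then have "finite I" "I \<subseteq> X"
    unfolding independent_def by auto
  then have "|B| \<le>o |I|"
    using rank_baseD(3)[OF B] \<open>S \<subseteq> flat X L hull I\<close> by blast
  then show "finite B"
    using \<open>finite I\<close> card_of_ordLeq_finite by blast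
  have "card I \<le> card B"
    using rank_baseD(1,2)[OF B]
      independent_card_le[OF \<open>finite B\<close> _ \<open>independent I\<close>] \<open>I \<subseteq> S\<close> by blast
  moreover have "card B \<le> card I"
    using \<open>|B| \<le>o |I|\<close> \<open>finite B\<close> \<open>finite I\<close> finite_card_of_ordLeq_iff_card_le by blast
  ultimately show "card B = card I"
    by simp
qed

lemma hull_Un_Int_subset:
  assumes A: "flat X L A" and B: "flat X L B"
  shows "finite S \<Longrightarrow> S \<subseteq> B \<Longrightarrow>
    flat X L hull (A \<union> S) \<inter> B \<subseteq> flat X L hull ((A \<inter> B) \<union> S)"
proof (induction S rule: finite_induct)
  case empty
  show ?case
    using hull_of_flat[OF A] hull_subset[of "A \<inter> B" "flat X L"] by auto
next
  case (insert s S)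
  let ?G = "flat X L hull ((A \<inter> B) \<union> insert s S)"
  have X: "s \<in> X" "A \<union> S \<subseteq> X" "(A \<inter> B) \<union> insert s S \<subseteq> X"
    using insert.prems A B flat_subset by blast+
  have IH: "flat X L hull (A \<union> S) \<inter> B \<subseteq> ?G"
    using insert.IH insert.prems hull_mono[of "(A \<inter> B) \<union> S" "(A \<inter> B) \<union> insert s S" "flat X L"]
    by blast
  have "s \<in> ?G"
    by (simp add: hull_inc)
  show ?case
  proof
    fix y assume y: "y \<in> flat X L hull (A \<union> insert s S) \<inter> B"
    show "y \<in> ?G"
    proof (cases "y = s")
      case True
      then show ?thesis
        using \<open>s \<in> ?G\<close> by simp
    next
      case False
      moreover have "y \<in> flat X L hull (insert s (A \<union> S))"
        using y by simp
      ultimately obtain a where a: "a \<in> flat X L hull (A \<union> S)" "a \<noteq> s" "y \<in> line a s"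
        using mem_hull_insertE[OF X(2,1)] by blast
      have "a \<in> X"
        using a(1) hull_subset_carrier[OF X(2)] by blast
      have "line y s = line a s"
        using line_through_eq[OF \<open>a \<in> X\<close> X(1) a(2) a(3) _ False]
          line_through_spec(3)[OF \<open>a \<in> X\<close> X(1) a(2)] by blast
      moreover have "line y s \<subseteq> B"
        using flat_line_through_subset[OF B _ _ False] y insert.prems by blast
      ultimately have "a \<in> ?G"
        using line_through_spec(2)[OF \<open>a \<in> X\<close> X(1) a(2)] a(1) IH by blast
      then have "line a s \<subseteq> ?G"
        using hull_line_through_subset[OF X(3) _ \<open>s \<in> ?G\<close> a(2)] by blast
      then show ?thesis
        using a(3) by blast
    qed
  qed
qed

lemma independent_Un_diff:
  assumes A: "flat X L A" and B: "flat X L B" and I1: "basis_of A I1"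
    and I2: "independent I2" "I2 \<subseteq> B" and I: "I \<subseteq> I2" "A \<inter> B \<subseteq> flat X L hull I"
  shows "independent (I1 \<union> (I2 - I))"
proof -
  have "I1 \<subseteq> X" "finite I2" "I2 \<subseteq> X"
    using I1 I2 unfolding basis_of_def independent_def by auto
  have "flat X L hull I1 = A"
    using I1 A hull_minimal[of I1 A "flat X L"] unfolding basis_of_def by blast
  have "independent (I1 \<union> K)" if "finite K" "K \<subseteq> I2 - I" for K
    using that
  proof (induction K rule: finite_induct)
    case empty
    then show ?case
      using I1 unfolding basis_of_def by simp
  next
    case (insert k K)
    have k: "k \<in> I2" "k \<notin> I" "k \<in> B" "k \<in> X"
      using insert.prems I2 \<open>I2 \<subseteq> X\<close> by auto
    have K: "K \<subseteq> I2" "K \<subseteq> B"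
      using insert.prems I2(2) by auto
    have "k \<notin> flat X L hull (I1 \<union> K)"
    proof
      assume "k \<in> flat X L hull (I1 \<union> K)"
      also have "\<dots> = flat X L hull (A \<union> K)"
        using hull_Un_left[of "flat X L" I1 K] \<open>flat X L hull I1 = A\<close> by simp
      finally have "k \<in> flat X L hull (A \<union> K) \<inter> B"
        using k(3) by blast
      also have "\<dots> \<subseteq> flat X L hull ((A \<inter> B) \<union> K)"
        using hull_Un_Int_subset[OF A B insert.hyps(1) K(2)] .
      also have "\<dots> \<subseteq> flat X L hull (flat X L hull I \<union> K)"
        using I(2) by (intro hull_mono) blast
      also have "\<dots> = flat X L hull (I \<union> K)"
        using hull_Un_left[of "flat X L" I K] by simp
      also have "\<dots> \<subseteq> flat X L hull (I2 - {k})"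
        using I(1) K(1) k(2) insert.hyps(2) by (intro hull_mono) blast
      finally show False
        using I2(1) k(1) unfolding independent_def by blast
    qed
    then show ?case
      using independent_insert[OF insert.IH k(4)] insert.prems by simp
  qed
  then show ?thesis
    using \<open>finite I2\<close> by blast
qed

lemma modular_bases:
  assumes A: "flat X L A" and B: "flat X L B"
    and C: "finite C" "C \<subseteq> X" "A \<union> B \<subseteq> flat X L hull C"
  obtains I I1 I2 where "basis_of (A \<inter> B) I" "basis_of A I1" "basis_of B I2"
    and "basis_of (A \<union> B) (I1 \<union> I2)" "I1 \<inter> I2 = I"
proof -
  obtain I where I: "basis_of (A \<inter> B) I"
    using basis_of_extend[OF C(1,2) _ independent_empty] C(3) by blast
  then have "independent I" "I \<subseteq> A" "I \<subseteq> B" "A \<inter> B \<subseteq> flat X L hull I"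
    unfolding basis_of_def by auto
  obtain I1 where I1: "I \<subseteq> I1" "basis_of A I1"
    using basis_of_extend[OF C(1,2) _ \<open>independent I\<close> \<open>I \<subseteq> A\<close>] C(3) by blast
  obtain I2 where I2: "I \<subseteq> I2" "basis_of B I2"
    using basis_of_extend[OF C(1,2) _ \<open>independent I\<close> \<open>I \<subseteq> B\<close>] C(3) by blast
  have "independent I2" "I2 \<subseteq> B" "I1 \<subseteq> A" "independent I1"
    using I1(2) I2(2) unfolding basis_of_def by auto
  have "I1 \<inter> I2 = I"
  proof (intro equalityI subsetI)
    fix x assume x: "x \<in> I1 \<inter> I2"
    show "x \<in> I"
    proof (rule ccontr)
      assume "x \<notin> I"
      have "x \<in> flat X L hull I"
        using x \<open>I1 \<subseteq> A\<close> \<open>I2 \<subseteq> B\<close> \<open>A \<inter> B \<subseteq> flat X L hull I\<close> by blast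
      also have "\<dots> \<subseteq> flat X L hull (I2 - {x})"
        using I2(1) \<open>x \<notin> I\<close> by (intro hull_mono) blast
      finally show False
        using \<open>independent I2\<close> x unfolding independent_def by blast
    qed
  qed (use I1(1) I2(1) in blast)
  moreover have "basis_of (A \<union> B) (I1 \<union> I2)"
    unfolding basis_of_def
  proof (intro conjI)
    have "I1 \<union> I2 = I1 \<union> (I2 - I)"
      using I1(1) by blast
    then show "independent (I1 \<union> I2)"
      using independent_Un_diff[OF A B I1(2) \<open>independent I2\<close> \<open>I2 \<subseteq> B\<close> I2(1)]
        \<open>A \<inter> B \<subseteq> flat X L hull I\<close> by simp
    show "I1 \<union> I2 \<subseteq> A \<union> B"
      using \<open>I1 \<subseteq> A\<close> \<open>I2 \<subseteq> B\<close> by blast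
    show "A \<union> B \<subseteq> flat X L hull (I1 \<union> I2)"
      using I1(2) I2(2) hull_mono[of I1 "I1 \<union> I2" "flat X L"] hull_mono[of I2 "I1 \<union> I2" "flat X L"]
      unfolding basis_of_def by blast
  qed
  ultimately show ?thesis
    using that I I1(2) I2(2) by blast
qed

lemma modular: "modular_liner X L"
  unfolding modular_liner_def
proof (intro allI impI, elim conjE)
  fix A B BA BB BI BU
  assume A: "flat X L A" and B: "flat X L B"
    and BA: "rank_base X L A BA" and BB: "rank_base X L B BB"
    and BI: "rank_base X L (A \<inter> B) BI" and BU: "rank_base X L (A \<union> B) BU"
  note BA' = rank_baseD(1,2)[OF BA] and BB' = rank_baseD(1,2)[OF BB]
    and BU' = rank_baseD(1,2)[OF BU]
  have IA: "|BI| \<le>o |BA|"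
    using BA' by (intro rank_baseD(3)[OF BI]) auto
  have AU: "|BA| \<le>o |BU|" and BU_: "|BB| \<le>o |BU|"
    using BU' by (intro rank_baseD(3)[OF BA] rank_baseD(3)[OF BB]; auto)+
  have UAB: "|BU| \<le>o |BA \<union> BB|"
  proof (rule rank_baseD(3)[OF BU])
    show "BA \<union> BB \<subseteq> X"
      using BA'(1) BB'(1) by blast
    have "flat X L hull BA \<union> flat X L hull BB \<subseteq> flat X L hull (BA \<union> BB)"
      by (rule hull_Un_subset)
    then show "A \<union> B \<subseteq> flat X L hull (BA \<union> BB)"
      using BA'(2) BB'(2) by blast
  qed
  show "|BI| +c |BU| =o |BA| +c |BB|"
  proof (cases "finite BU")
    case False
    then show ?thesis
      by (rule csum_ordIso_csum_if_infinite[OF IA AU BU_ UAB])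
  next
    case True
    obtain I I1 I2 where I: "basis_of (A \<inter> B) I" "basis_of A I1" "basis_of B I2"
      "basis_of (A \<union> B) (I1 \<union> I2)" "I1 \<inter> I2 = I"
      using modular_bases[OF A B True BU'] by blast
    have "finite I1" "finite I2"
      using I(2,3) unfolding basis_of_def independent_def by auto
    then have "card I + card (I1 \<union> I2) = card I1 + card I2"
      using card_Un_Int[of I1 I2] I(5) by simp
    then have "card BI + card BU = card BA + card BB"
      using rank_base_card_eq(2)[OF BI I(1)] rank_base_card_eq(2)[OF BU I(4)]
        rank_base_card_eq(2)[OF BA I(2)] rank_base_card_eq(2)[OF BB I(3)] by simp
    then show ?thesis
      using rank_base_card_eq(1)[OF BI I(1)] rank_base_card_eq(1)[OF BU I(4)]
        rank_base_card_eq(1)[OF BA I(2)] rank_base_card_eq(1)[OF BB I(3)]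
      by (subst finite_csum_ordIso_iff) simp_all
  qed
qed

end

theorem theorem5p5p1:
  fixes X :: "'a set" and L :: "'a set set"
  assumes "liner X L"
  shows "(modular_liner X L \<longleftrightarrow> strongly_regular X L) \<and>
         (strongly_regular X L \<longleftrightarrow> no_disjoint_coplanar_lines X L)"
proof -
  interpret liner_structure X L
    by (rule liner_structure.intro) (fact assms)
  have "modular_liner X L" if "strongly_regular X L"
  proof -
    interpret strongly_regular_liner X L
      by (intro strongly_regular_liner.intro strongly_regular_liner_axioms.intro
          liner_structure.intro assms that)
    show ?thesis
      by (rule modular)
  qed
  moreover note no_disjoint_coplanar_lines_if_modular strongly_regular_if_no_disjoint_coplanar_lines
  ultimately show ?thesis
    by blast
qed

end
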